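(* The boundary of $V_n$ (in $\mathbb{R}^n$) consists exactly of those $\mathbf b\in V_n$ such that $g_{\mathbf b}$ has a multiple root.
   Context: For $\mathbf b=(b_1,\dots,b_n)\in\mathbb{R}^n$ let $g_{\mathbf b}=(x^{2n}+1)+b_1(x^{2n-1}+x)+\cdots+b_{n-1}(x^{n+1}+x^{n-1})+b_nx^n$. Let $V_n$ be the set of $\mathbf b\in\mathbb{R}^n$ such that all complex roots of $g_{\mathbf b}$ lie on the unit circle. *)

theory Defs
  imports "HOL-Analysis.Analysis" "HOL-Computational_Algebra.Polynomial"
begin

text \<open>Coordinates of R^n are indexed by a finite well-ordered type 'n; the coordinate
  i is the (pos i + 1)-th coordinate, i.e. b_k with k = pos i + 1, where n = CARD('n).\<close>

definition pos :: "'n::{finite,wellorder} \<Rightarrow> nat" where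
  "pos i = card {j. j < i}"

definition gpoly :: "real ^ 'n::{finite,wellorder} \<Rightarrow> complex poly" where
  "gpoly b = monom 1 (2 * CARD('n)) + 1 +
     (\<Sum>i\<in>UNIV. (if pos i + 1 = CARD('n)
                   then monom (complex_of_real (b $ i)) CARD('n)
                   else monom (complex_of_real (b $ i)) (2 * CARD('n) - (pos i + 1))
                        + monom (complex_of_real (b $ i)) (pos i + 1)))"

definition Vset :: "(real ^ 'n::{finite,wellorder}) set" where
  "Vset = {b. \<forall>z. poly (gpoly b) z = 0 \<longrightarrow> cmod z = 1}"

end

theory Submission
  imports Defs "HOL-Computational_Algebra.Fundamental_Theorem_Algebra"
begin

text \<open>
  The set V is closed: a monic polynomial of degree 2n with all roots on the unit circle has
  modulus at least (1 - |z|)^(2n) inside the disc, and this bound passes to limits.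

  Since g_b is real and self-reciprocal, its roots come in pairs z, 1/conj z. If b \<in> V is a
  limit of points outside V, such pairs of distinct roots, one inside the disc, converge to a
  common root on the circle; the divided differences of g_b at these pairs vanish and converge
  to the derivative, so the limit root is multiple. Hence simple roots force b into the interior.

  Conversely, a multiple root z (necessarily on the circle) makes g_b divisible by Q^j, where
  Q = x^2 - 2 Re(z) x + 1 and j = 1 if z = \<plusminus>1, j = 2 otherwise. Writing g_b = Q^j r, the
  polynomial (Q^j + d x^j) r is again some g_b' with b' - b proportional to d, and for arbitrarily
  small d the factor Q^j + d x^j has a root off the circle. So b lies on the boundary.
\<close>

lemma pos_less_card: "pos (i::'n::{finite,wellorder}) < CARD('n)"
  unfolding pos_def by (rule psubset_card_mono) auto

lemma strict_mono_pos: "strict_mono (pos :: 'n::{finite,wellorder} \<Rightarrow> nat)"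
  unfolding strict_mono_def pos_def by (auto intro!: psubset_card_mono)

lemma range_pos: "range (pos :: 'n::{finite,wellorder} \<Rightarrow> nat) = {..<CARD('n)}"
proof -
  have "card (range (pos :: 'n \<Rightarrow> nat)) = card {..<CARD('n)}"
    by (simp add: card_image strict_mono_imp_inj_on[OF strict_mono_pos])
  then show ?thesis
    using pos_less_card by (intro card_subset_eq) auto
qed

lemma sum_pos_eq:
  fixes f :: "'n::{finite,wellorder} \<Rightarrow> 'a::comm_monoid_add"
  assumes "pos i + 1 = k"
  shows "(\<Sum>j | pos j + 1 = k. f j) = f i"
proof -
  have "pos j + 1 = k \<longleftrightarrow> j = i" for j
    using assms strict_mono_eq[OF strict_mono_pos] by auto
  then show ?thesis by simp
qed

(* Coefficient m of g_b is the coordinate b_k with k = fold_index N m; for m = 0 and for m > 2N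
   (truncated subtraction) k = 0, which matches no coordinate. *)
definition fold_index :: "nat \<Rightarrow> nat \<Rightarrow> nat" where
  "fold_index N m = (if m \<le> N then m else 2 * N - m)"

lemma coeff_gpoly:
  "coeff (gpoly (b :: real ^ 'n::{finite,wellorder})) m = complex_of_real
     (of_bool (m = 2 * CARD('n)) + of_bool (m = 0) +
      (\<Sum>i | pos i + 1 = fold_index CARD('n) m. b $ i))"
proof -
  have "coeff (if pos i + 1 = CARD('n)
                 then monom (complex_of_real (b $ i)) CARD('n)
                 else monom (complex_of_real (b $ i)) (2 * CARD('n) - (pos i + 1))
                      + monom (complex_of_real (b $ i)) (pos i + 1)) m
     = (if pos i + 1 = fold_index CARD('n) m then complex_of_real (b $ i) else 0)" for i :: 'n
    using pos_less_card[of i] by (auto simp: fold_index_def)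
  then have "coeff (gpoly b) m = of_bool (m = 2 * CARD('n)) + of_bool (m = 0) +
      (\<Sum>i\<in>UNIV. if pos i + 1 = fold_index CARD('n) m then complex_of_real (b $ i) else 0)"
    unfolding gpoly_def coeff_add coeff_sum by simp
  then show ?thesis
    by (simp add: sum.inter_filter[symmetric])
qed

lemma coeff_gpoly_0 [simp]: "coeff (gpoly b) 0 = 1"
  by (simp add: coeff_gpoly fold_index_def)

lemma coeff_gpoly_top [simp]: "coeff (gpoly (b :: real ^ 'n::{finite,wellorder})) (2 * CARD('n)) = 1"
  by (simp add: coeff_gpoly fold_index_def)

lemma coeff_gpoly_eq_0:
  fixes b :: "real ^ 'n::{finite,wellorder}"
  assumes "2 * CARD('n) < m"
  shows "coeff (gpoly b) m = 0"
proof -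
  have "fold_index CARD('n) m = 0"
    using assms by (simp add: fold_index_def)
  then show ?thesis
    using assms by (simp add: coeff_gpoly)
qed

lemma degree_gpoly [simp]: "degree (gpoly (b :: real ^ 'n::{finite,wellorder})) = 2 * CARD('n)"
  by (intro antisym degree_le le_degree) (auto simp: coeff_gpoly_eq_0)

lemma gpoly_nonzero [simp]: "gpoly b \<noteq> 0"
  by (metis coeff_0 coeff_gpoly_0 zero_neq_one)

lemma map_poly_cnj_gpoly [simp]: "map_poly cnj (gpoly b) = gpoly b"
  by (rule poly_eqI) (simp add: coeff_map_poly coeff_gpoly)

lemma reflect_poly_gpoly [simp]: "reflect_poly (gpoly (b :: real ^ 'n::{finite,wellorder})) = gpoly b"
proof (rule poly_eqI)
  fix m
  show "coeff (reflect_poly (gpoly b)) m = coeff (gpoly b) m"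
  proof (cases "m \<le> 2 * CARD('n)")
    case True
    then have "fold_index CARD('n) (2 * CARD('n) - m) = fold_index CARD('n) m"
      by (auto simp: fold_index_def)
    with True show ?thesis
      by (auto simp: coeff_reflect_poly coeff_gpoly)
  qed (simp add: coeff_reflect_poly coeff_gpoly_eq_0)
qed

lemma gpoly_add_scaleR:
  fixes b v :: "real ^ 'n::{finite,wellorder}"
  shows "gpoly (b + d *\<^sub>R v) =
           gpoly b + smult (of_real d) (gpoly v - gpoly (0 :: real ^ 'n::{finite,wellorder}))"
  by (rule poly_eqI) (simp add: coeff_gpoly sum.distrib sum_distrib_left algebra_simps)

lemma gpoly_of_palindromic:
  fixes P :: "complex poly"
  assumes real: "map_poly cnj P = P" and deg: "degree P < 2 * CARD('n)"
    and palindromic: "\<And>m. m \<le> 2 * CARD('n) \<Longrightarrow> coeff P (2 * CARD('n) - m) = coeff P m"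
  shows "gpoly (\<chi> i. Re (coeff P (pos i + 1)) :: real ^ 'n::{finite,wellorder}) =
           gpoly (0 :: real ^ 'n::{finite,wellorder}) + P"
proof (rule poly_eqI)
  fix m
  let ?N = "CARD('n)" and ?k = "fold_index CARD('n) m"
  have coeff_real: "complex_of_real (Re (coeff P k)) = coeff P k" for k
    using arg_cong[OF real, of "\<lambda>p. coeff p k"]
    by (simp add: coeff_map_poly Reals_cnj_iff complex_is_Real_iff)
  have "(\<Sum>j::'n | pos j + 1 = ?k. complex_of_real (Re (coeff P (pos j + 1)))) = coeff P m"
  proof (cases "?k = 0")
    case True
    then have "m = 0 \<or> 2 * ?N \<le> m"
      by (auto simp: fold_index_def split: if_splits)
    moreover have "coeff P (2 * ?N) = 0"
      using deg by (simp add: coeff_eq_0)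
    ultimately have "coeff P m = 0"
      using palindromic[of "2 * ?N"] deg by (auto simp: coeff_eq_0)
    with True show ?thesis by simp
  next
    case False
    then have "?k - 1 \<in> range (pos :: 'n \<Rightarrow> nat)"
      unfolding range_pos by (auto simp: fold_index_def)
    then obtain i :: 'n where "pos i = ?k - 1"
      by auto
    then have i: "pos i + 1 = ?k"
      using False by simp
    have "(\<Sum>j::'n | pos j + 1 = ?k. complex_of_real (Re (coeff P (pos j + 1)))) =
        complex_of_real (Re (coeff P (pos i + 1)))"
      by (rule sum_pos_eq[OF i])
    also have "\<dots> = coeff P ?k"
      using i coeff_real by simp
    also have "\<dots> = coeff P m"
      using False palindromic[of m] by (auto simp: fold_index_def)
    finally show ?thesis .
  qed
  moreover have "?k = 0" if "m = 0 \<or> m = 2 * ?N"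
    using that by (auto simp: fold_index_def)
  ultimately show "coeff (gpoly (\<chi> i. Re (coeff P (pos i + 1)) :: real ^ 'n::{finite,wellorder})) m =
      coeff (gpoly (0 :: real ^ 'n::{finite,wellorder}) + P) m"
    by (simp add: coeff_gpoly)
qed

lemma poly_gpoly_0 [simp]: "poly (gpoly b) 0 = 1"
  by (simp add: poly_0_coeff_0)

lemma poly_gpoly_inverse_cnj:
  assumes "poly (gpoly b) z = 0"
  shows "poly (gpoly b) (inverse (cnj z)) = 0"
proof -
  have "z \<noteq> 0"
    using assms by auto
  have "poly (gpoly b) (cnj z) = 0"
    using assms poly_cnj[of "gpoly b" z] by simp
  then show ?thesis
    using poly_reflect_poly_nz[of "cnj z" "gpoly b"] \<open>z \<noteq> 0\<close> by simp
qed

lemma Vset_iff_no_root_in_disc: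
  "b \<in> Vset \<longleftrightarrow> (\<forall>z. poly (gpoly b) z = 0 \<longrightarrow> 1 \<le> cmod z)"
proof
  assume outside: "\<forall>z. poly (gpoly b) z = 0 \<longrightarrow> 1 \<le> cmod z"
  show "b \<in> Vset"
    unfolding Vset_def
  proof (intro CollectI allI impI)
    fix z
    assume root: "poly (gpoly b) z = 0"
    then have "1 \<le> cmod (inverse (cnj z))"
      using outside poly_gpoly_inverse_cnj by blast
    then have "1 \<le> inverse (cmod z)"
      by (simp add: norm_inverse)
    then have "cmod z \<le> 1"
      by (simp add: one_le_inverse_iff)
    with root outside show "cmod z = 1"
      by force
  qed
qed (auto simp: Vset_def)

lemma poly_eq_sum_upto:
  fixes p :: "'a::{comm_semiring_0,semiring_1} poly"
  assumes "degree p \<le> D"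
  shows "poly p x = (\<Sum>m\<le>D. coeff p m * x ^ m)"
  unfolding poly_altdef
  by (rule sum.mono_neutral_left) (use assms in \<open>auto simp: coeff_eq_0\<close>)

lemma tendsto_poly_coeffwise:
  fixes p :: "nat \<Rightarrow> 'a::real_normed_field poly"
  assumes "\<And>k. degree (p k) \<le> D" "degree q \<le> D"
    and "\<And>m. (\<lambda>k. coeff (p k) m) \<longlonglongrightarrow> coeff q m" and "x \<longlonglongrightarrow> z"
  shows "(\<lambda>k. poly (p k) (x k)) \<longlonglongrightarrow> poly q z"
  unfolding poly_eq_sum_upto[OF assms(1)] poly_eq_sum_upto[OF assms(2)]
  by (intro tendsto_intros assms)

lemma tendsto_coeff_gpoly:
  "s \<longlonglongrightarrow> b \<Longrightarrow> (\<lambda>k. coeff (gpoly (s k)) m) \<longlonglongrightarrow> coeff (gpoly b) m"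
  unfolding coeff_gpoly by (intro tendsto_intros)

lemma tendsto_poly_gpoly:
  fixes s :: "nat \<Rightarrow> real ^ 'n::{finite,wellorder}"
  assumes "s \<longlonglongrightarrow> b" and "x \<longlonglongrightarrow> z"
  shows "(\<lambda>k. poly (gpoly (s k)) (x k)) \<longlonglongrightarrow> poly (gpoly b) z"
  by (rule tendsto_poly_coeffwise[where D = "2 * CARD('n)"]) (use assms tendsto_coeff_gpoly in auto)

lemma norm_poly_ge_if_roots_on_circle:
  fixes p :: "complex poly"
  assumes "lead_coeff p = 1" and "\<And>a. poly p a = 0 \<Longrightarrow> cmod a = 1" and "cmod z < 1"
  shows "(1 - cmod z) ^ degree p \<le> cmod (poly p z)"
proof -
  obtain root where "smult (lead_coeff p) (\<Prod>i<degree p. [:-root i, 1:]) = p"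
    using complex_poly_decompose' by blast
  then have p: "p = (\<Prod>i<degree p. [:-root i, 1:])"
    using assms(1) by simp
  have poly_p: "poly p y = (\<Prod>i<degree p. y - root i)" for y
    by (subst p) (simp add: poly_prod)
  have "cmod (root i) = 1" if "i < degree p" for i
    using that assms(2) by (auto simp: poly_p intro: prod_zero)
  then have "1 - cmod z \<le> cmod (z - root i)" if "i < degree p" for i
    using that norm_triangle_ineq2[of "root i" z] by (simp add: norm_minus_commute)
  then have "(\<Prod>i<degree p. 1 - cmod z) \<le> (\<Prod>i<degree p. cmod (z - root i))"
    using assms(3) by (intro prod_mono) auto
  then show ?thesis
    by (simp add: poly_p prod_norm)
qed

lemma closed_Vset: "closed (Vset :: (real ^ 'n::{finite,wellorder}) set)"
  unfolding closed_sequential_limits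
proof (intro allI impI, elim conjE)
  fix s :: "nat \<Rightarrow> real ^ 'n::{finite,wellorder}" and b
  assume s: "\<forall>k. s k \<in> Vset" and lim: "s \<longlonglongrightarrow> b"
  show "b \<in> Vset"
    unfolding Vset_iff_no_root_in_disc
  proof (intro allI impI)
    fix z
    assume root: "poly (gpoly b) z = 0"
    show "1 \<le> cmod z"
    proof (rule ccontr)
      assume "\<not> 1 \<le> cmod z"
      then have z: "cmod z < 1" by simp
      have bound: "(1 - cmod z) ^ (2 * CARD('n)) \<le> cmod (poly (gpoly (s k)) z)" for k
        using norm_poly_ge_if_roots_on_circle[of "gpoly (s k)" z] s z by (simp add: Vset_def)
      have "(\<lambda>k. cmod (poly (gpoly (s k)) z)) \<longlonglongrightarrow> cmod (poly (gpoly b) z)"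
        by (intro tendsto_norm tendsto_poly_gpoly lim tendsto_const)
      then have "(1 - cmod z) ^ (2 * CARD('n)) \<le> cmod (poly (gpoly b) z)"
        by (rule LIMSEQ_le_const) (use bound in auto)
      then have "(1 - cmod z) ^ (2 * CARD('n)) \<le> 0"
        using root by simp
      moreover have "0 < (1 - cmod z) ^ (2 * CARD('n))"
        using z by simp
      ultimately show False
        by simp
    qed
  qed
qed

(* (p u - p w) / (u - w) written as a polynomial in u and w, so that it stays continuous on the
   diagonal; D is any bound on the degree of p. *)
definition divided_difference :: "nat \<Rightarrow> 'a::comm_ring_1 poly \<Rightarrow> 'a \<Rightarrow> 'a \<Rightarrow> 'a" where
  "divided_difference D p u w = (\<Sum>m\<le>D. coeff p m * (\<Sum>i<m. w ^ (m - Suc i) * u ^ i))"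

lemma poly_diff_eq_divided_difference:
  assumes "degree p \<le> D"
  shows "poly p u - poly p w = divided_difference D p u w * (u - w)"
proof -
  have "poly p u - poly p w = (\<Sum>m\<le>D. coeff p m * (u ^ m - w ^ m))"
    by (simp add: poly_eq_sum_upto[OF assms] sum_subtractf[symmetric] right_diff_distrib)
  also have "\<dots> = divided_difference D p u w * (u - w)"
    unfolding divided_difference_def sum_distrib_right
    by (intro sum.cong) (simp_all add: power_diff_sumr2 mult_ac)
  finally show ?thesis .
qed

lemma divided_difference_diagonal:
  fixes p :: "'a::real_normed_field poly"
  assumes "degree p \<le> D"
  shows "divided_difference D p w w = poly (pderiv p) w"
proof -
  have "DERIV (poly p) w :> divided_difference D p w w"
    unfolding CARAT_DERIV
  proof (intro exI conjI allI)
    show "poly p z - poly p w = divided_difference D p z w * (z - w)" for z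
      by (rule poly_diff_eq_divided_difference[OF assms])
    show "isCont (\<lambda>z. divided_difference D p z w) w"
      unfolding divided_difference_def by (intro continuous_intros)
  qed simp
  then show ?thesis
    using poly_DERIV by (rule DERIV_unique)
qed

lemma order_gt_1_iff:
  fixes p :: "'a::field_char_0 poly"
  assumes "p \<noteq> 0"
  shows "1 < order z p \<longleftrightarrow> poly p z = 0 \<and> poly (pderiv p) z = 0"
proof (cases "poly p z = 0")
  case True
  have "pderiv p \<noteq> 0"
    using assms True pderiv_iszero by force
  with True show ?thesis
    using order_pderiv[OF assms True] order_gt_0_iff by auto
qed (simp add: order_0I)

lemma multiple_root_of_converging_roots:
  fixes p :: "nat \<Rightarrow> 'a::real_normed_field poly"
  assumes deg: "\<And>k. degree (p k) \<le> D" "degree q \<le> D" and "q \<noteq> 0"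
    and coeff: "\<And>m. (\<lambda>k. coeff (p k) m) \<longlonglongrightarrow> coeff q m"
    and roots: "\<And>k. poly (p k) (u k) = 0" "\<And>k. poly (p k) (w k) = 0"
    and distinct: "\<And>k. u k \<noteq> w k"
    and lim: "u \<longlonglongrightarrow> l" "w \<longlonglongrightarrow> l"
  shows "1 < order l q"
proof -
  have "(\<lambda>k. poly (p k) (w k)) \<longlonglongrightarrow> poly q l"
    by (rule tendsto_poly_coeffwise[OF deg coeff lim(2)])
  then have root: "poly q l = 0"
    by (simp add: roots(2) LIMSEQ_const_iff)
  have "divided_difference D (p k) (u k) (w k) = 0" for k
    using poly_diff_eq_divided_difference[OF deg(1), of k "u k" "w k"] roots distinct[of k] by simp
  moreover have "(\<lambda>k. divided_difference D (p k) (u k) (w k)) \<longlonglongrightarrow> divided_difference D q l l"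
    unfolding divided_difference_def by (intro tendsto_intros coeff lim)
  ultimately have "divided_difference D q l l = 0"
    by (simp add: LIMSEQ_const_iff)
  then show ?thesis
    using root order_gt_1_iff[OF \<open>q \<noteq> 0\<close>] divided_difference_diagonal[OF deg(2)] by simp
qed

lemma inverse_cnj_unit:
  assumes "cmod z = 1"
  shows "inverse (cnj z) = z"
proof (rule inverse_unique)
  show "cnj z * z = 1"
    using assms complex_norm_square[of z] by (simp add: mult.commute)
qed

lemma interior_Vset_if_simple_roots:
  fixes b :: "real ^ 'n::{finite,wellorder}"
  assumes "b \<in> Vset" and simple: "\<And>z. order z (gpoly b) \<le> 1"
  shows "b \<in> interior Vset"
proof (rule ccontr)
  assume "b \<notin> interior Vset"
  then have "b \<in> closure (- Vset)"
    by (simp add: interior_closure)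
  then obtain s where s: "\<And>k. s k \<notin> Vset" and lim_s: "s \<longlonglongrightarrow> b"
    unfolding closure_sequential by auto
  have "\<forall>k. \<exists>z. poly (gpoly (s k)) z = 0 \<and> cmod z < 1"
    using s by (auto simp: Vset_iff_no_root_in_disc not_le)
  then obtain w where w: "\<And>k. poly (gpoly (s k)) (w k) = 0" "\<And>k. cmod (w k) < 1"
    unfolding choice_iff by blast
  have "bounded (range w)"
    using w(2) by (intro boundedI[of _ 1]) (auto intro: less_imp_le)
  then obtain l r where r: "strict_mono r" and lim_w: "(w \<circ> r) \<longlonglongrightarrow> l"
    using bounded_imp_convergent_subsequence by blast
  have lim_sr: "(s \<circ> r) \<longlonglongrightarrow> b"
    using LIMSEQ_subseq_LIMSEQ[OF lim_s r] .
  have "(\<lambda>k. poly (gpoly ((s \<circ> r) k)) ((w \<circ> r) k)) \<longlonglongrightarrow> poly (gpoly b) l"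
    by (rule tendsto_poly_gpoly[OF lim_sr lim_w])
  then have "poly (gpoly b) l = 0"
    by (simp add: w(1) LIMSEQ_const_iff)
  then have "cmod l = 1"
    using assms(1) by (simp add: Vset_def)
  define u where "u k = inverse (cnj (w k))" for k
  have u: "poly (gpoly (s k)) (u k) = 0" for k
    unfolding u_def by (rule poly_gpoly_inverse_cnj[OF w(1)])
  have "u k \<noteq> w k" for k
  proof -
    have "w k \<noteq> 0"
      using w(1)[of k] by auto
    then have "1 < cmod (u k)"
      using w(2)[of k] by (simp add: u_def norm_inverse one_less_inverse)
    then show ?thesis
      using w(2)[of k] by auto
  qed
  moreover have "(u \<circ> r) \<longlonglongrightarrow> l"
    using tendsto_inverse[OF tendsto_cnj[OF lim_w]] \<open>cmod l = 1\<close>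
    by (fastforce simp: u_def comp_def inverse_cnj_unit)
  ultimately have "1 < order l (gpoly b)"
    using lim_w w(1) u LIMSEQ_subseq_LIMSEQ[OF lim_s r]
    by (intro multiple_root_of_converging_roots[of "\<lambda>k. gpoly (s (r k))" "2 * CARD('n)" _
          "u \<circ> r" "w \<circ> r"]) (auto simp: comp_def intro: tendsto_coeff_gpoly)
  with simple show False
    using not_le by blast
qed

lemma map_poly_cnj_mult: "map_poly cnj (p * q) = map_poly cnj p * map_poly cnj q"
  by (simp add: poly_eq_poly_eq_iff[symmetric] fun_eq_iff)

lemma map_poly_cnj_power: "map_poly cnj (p ^ n) = map_poly cnj p ^ n"
  by (simp add: poly_eq_poly_eq_iff[symmetric] fun_eq_iff)

lemma map_poly_cnj_cancel:
  assumes "map_poly cnj (q * r) = q * r" and "map_poly cnj q = q" and "q \<noteq> 0"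
  shows "map_poly cnj r = r"
  using assms by (simp add: map_poly_cnj_mult)

lemma reflect_poly_cancel:
  fixes q r :: "'a::idom poly"
  assumes "reflect_poly (q * r) = q * r" and "reflect_poly q = q" and "q \<noteq> 0"
  shows "reflect_poly r = r"
  using assms by (simp add: reflect_poly_mult)

lemma order_cnj:
  fixes p :: "complex poly"
  assumes "map_poly cnj p = p" and "p \<noteq> 0"
  shows "order (cnj z) p = order z p"
proof -
  have "order a p \<le> order (cnj a) p" for a
  proof -
    obtain s where s: "p = [:-a, 1:] ^ order a p * s"
      using order_1[of a p] by (elim dvdE)
    have "map_poly cnj [:-a, 1:] = [:-cnj a, 1:]"
      by (simp add: map_poly_pCons)
    then have "p = [:-cnj a, 1:] ^ order a p * map_poly cnj s"
      using arg_cong[OF s, of "map_poly cnj"] assms(1)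
      by (simp only: map_poly_cnj_mult map_poly_cnj_power)
    then have "[:-cnj a, 1:] ^ order a p dvd p"
      by (rule dvdI)
    with assms(2) show ?thesis
      by (simp add: order_divides)
  qed
  from this[of z] this[of "cnj z"] show ?thesis
    by simp
qed

lemma coeff_monom_mult_palindromic:
  assumes "reflect_poly r = r" and "M = degree r + 2 * j" and "m \<le> M"
  shows "coeff (monom 1 j * r) (M - m) = coeff (monom 1 j * r) m"
proof -
  have sym: "coeff r (degree r - t) = coeff r t" if "t \<le> degree r" for t
    using arg_cong[OF assms(1), of "\<lambda>p. coeff p t"] that by (simp add: coeff_reflect_poly)
  consider "m < j" | "M - m < j" | "j \<le> m" "j \<le> M - m"
    by linarith
  then show ?thesis
  proof cases
    case 1
    then show ?thesis
      using assms(2,3) by (simp add: coeff_monom_mult coeff_eq_0)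
  next
    case 2
    then show ?thesis
      using assms(2,3) by (simp add: coeff_monom_mult coeff_eq_0)
  next
    case 3
    then have "M - m - j = degree r - (m - j)" and "m - j \<le> degree r"
      using assms(2,3) by simp_all
    with 3 show ?thesis
      using sym[of "m - j"] by (simp add: coeff_monom_mult)
  qed
qed

definition recip_quadratic :: "real \<Rightarrow> complex poly" where
  "recip_quadratic c = [:1, - complex_of_real c, 1:]"

lemma recip_quadratic_nonzero [simp]: "recip_quadratic c \<noteq> 0"
  by (simp add: recip_quadratic_def)

lemma degree_recip_quadratic [simp]: "degree (recip_quadratic c) = 2"
  by (simp add: recip_quadratic_def)

lemma map_poly_cnj_recip_quadratic [simp]: "map_poly cnj (recip_quadratic c) = recip_quadratic c"
  by (simp add: recip_quadratic_def map_poly_pCons)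

lemma reflect_poly_recip_quadratic [simp]: "reflect_poly (recip_quadratic c) = recip_quadratic c"
  by (simp add: recip_quadratic_def reflect_poly_def)

lemma poly_recip_quadratic: "poly (recip_quadratic c) x = 1 - complex_of_real c * x + x ^ 2"
  by (simp add: recip_quadratic_def algebra_simps power2_eq_square)

lemma gpoly_perturbation:
  fixes b :: "real ^ 'n::{finite,wellorder}"
  assumes g: "gpoly b = recip_quadratic c ^ j * r" and "1 \<le> j"
  obtains v where "\<And>d. gpoly (b + d *\<^sub>R v) = (recip_quadratic c ^ j + monom (of_real d) j) * r"
proof -
  let ?Q = "recip_quadratic c ^ j" and ?P = "monom 1 j * r"
  have "r \<noteq> 0"
    using g gpoly_nonzero[of b] by auto
  have deg: "2 * CARD('n) = degree r + 2 * j"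
    using arg_cong[OF g, of degree] \<open>r \<noteq> 0\<close> by (simp add: degree_mult_eq degree_power_eq)
  have "map_poly cnj (?Q * r) = ?Q * r"
    using map_poly_cnj_gpoly[of b] unfolding g .
  then have "map_poly cnj r = r"
    by (rule map_poly_cnj_cancel) (simp_all add: map_poly_cnj_power)
  then have "map_poly cnj ?P = ?P"
    by (simp add: map_poly_cnj_mult map_poly_monom)
  moreover have "degree ?P < 2 * CARD('n)"
    using deg \<open>1 \<le> j\<close> \<open>r \<noteq> 0\<close> by (simp add: degree_mult_eq degree_monom_eq)
  moreover have "reflect_poly (?Q * r) = ?Q * r"
    using reflect_poly_gpoly[of b] unfolding g .
  then have "reflect_poly r = r"
    by (rule reflect_poly_cancel) (simp_all add: reflect_poly_power)
  then have "coeff ?P (2 * CARD('n) - m) = coeff ?P m" if "m \<le> 2 * CARD('n)" for m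
    using that deg by (intro coeff_monom_mult_palindromic) simp_all
  ultimately have v: "gpoly (\<chi> i. Re (coeff ?P (pos i + 1)) :: real ^ 'n::{finite,wellorder}) =
      gpoly (0 :: real ^ 'n::{finite,wellorder}) + ?P"
    by (rule gpoly_of_palindromic)
  show ?thesis
  proof (rule that)
    fix d
    have "gpoly (b + d *\<^sub>R (\<chi> i. Re (coeff ?P (pos i + 1)))) = gpoly b + smult (of_real d) ?P"
      by (simp only: gpoly_add_scaleR v add_diff_cancel_left')
    also have "\<dots> = (recip_quadratic c ^ j + monom (of_real d) j) * r"
      by (simp add: g distrib_right smult_monom flip: mult_smult_left)
    finally show "gpoly (b + d *\<^sub>R (\<chi> i. Re (coeff ?P (pos i + 1)))) =
        (recip_quadratic c ^ j + monom (of_real d) j) * r" .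
  qed
qed

lemma quadratic_root_on_circle:
  fixes w x :: complex
  assumes root: "1 + w * x + x ^ 2 = 0" and "cmod x = 1"
  shows "w = of_real (- 2 * Re x)"
proof -
  have "x * cnj x = 1"
    using \<open>cmod x = 1\<close> complex_norm_square[of x] by simp
  then have "w * x = - (cnj x + x) * x"
    using root by algebra
  then have "w = - (cnj x + x)"
    using \<open>cmod x = 1\<close> by auto
  then show ?thesis
    using complex_add_cnj[of x] by (simp add: add.commute)
qed

lemma exists_quadratic_root: "\<exists>x::complex. 1 + w * x + x ^ 2 = 0"
  using fundamental_theorem_of_algebra_alt[of "[:1, w, 1:]"]
  by (simp add: algebra_simps power2_eq_square)

lemma perturbed_recip_quadratic_root_off_circle:
  assumes "\<bar>c\<bar> = 2" and "0 < e"
  shows "\<exists>d x. \<bar>d\<bar> < e \<and> poly (recip_quadratic c ^ 1 + monom (of_real d) 1) x = 0 \<and> cmod x \<noteq> 1"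
proof -
  \<comment> \<open>Pushing the middle coefficient of x^2 - c x + 1 beyond \<plusminus>2 moves both roots off the circle.\<close>
  define t where "t = e / 4"
  obtain x where x: "1 + complex_of_real (- c * (1 + t)) * x + x ^ 2 = 0"
    using exists_quadratic_root by blast
  have "poly (recip_quadratic c ^ 1 + monom (of_real (- c * t)) 1) x = 0"
    using x by (simp add: poly_recip_quadratic poly_monom algebra_simps)
  moreover have "cmod x \<noteq> 1"
  proof
    assume "cmod x = 1"
    then have "c * (1 + t) = 2 * Re x"
      using arg_cong[OF quadratic_root_on_circle[OF x], of Re] by simp
    have "2 * (1 + t) = \<bar>c * (1 + t)\<bar>"
      using assms by (simp add: t_def abs_mult)
    also have "\<dots> = 2 * \<bar>Re x\<bar>"
      by (simp add: \<open>c * (1 + t) = 2 * Re x\<close> abs_mult)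
    also have "\<dots> \<le> 2"
      using abs_Re_le_cmod[of x] \<open>cmod x = 1\<close> by simp
    finally show False
      using \<open>0 < e\<close> by (simp add: t_def)
  qed
  moreover have "\<bar>- c * t\<bar> < e"
    using assms by (simp add: t_def abs_mult)
  ultimately show ?thesis
    by blast
qed

lemma perturbed_recip_quadratic_square_root_off_circle:
  assumes "0 < e"
  shows "\<exists>d x. \<bar>d\<bar> < e \<and> poly (recip_quadratic c ^ 2 + monom (of_real d) 2) x = 0 \<and> cmod x \<noteq> 1"
proof -
  \<comment> \<open>Q^2 + t^2 x^2 = (Q + i t x) (Q - i t x), and Q + i t x has a non-real middle coefficient.\<close>
  define t where "t = min 1 (e / 2)"
  have "0 < t" "t \<le> 1" "t < e"
    using assms by (auto simp: t_def)
  obtain x where x: "1 + (- complex_of_real c + \<i> * of_real t) * x + x ^ 2 = 0"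
    using exists_quadratic_root by blast
  have "poly (recip_quadratic c) x = - \<i> * of_real t * x"
    using x by (simp add: poly_recip_quadratic algebra_simps)
  then have "poly (recip_quadratic c ^ 2 + monom (of_real (t ^ 2)) 2) x = 0"
    by (simp add: poly_monom power_mult_distrib)
  moreover have "cmod x \<noteq> 1"
  proof
    assume "cmod x = 1"
    then have "Im (- complex_of_real c + \<i> * of_real t) = 0"
      using quadratic_root_on_circle[OF x] by simp
    with \<open>0 < t\<close> show False
      by simp
  qed
  moreover have "t * t \<le> t"
    by (rule mult_left_le_one_le) (use \<open>0 < t\<close> \<open>t \<le> 1\<close> in simp_all)
  then have "\<bar>t ^ 2\<bar> < e"
    using \<open>t < e\<close> by (simp add: power2_eq_square)
  ultimately show ?thesis
    by blast
qed

lemma not_interior_Vset_if_perturbed_root_off_circle: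
  fixes b :: "real ^ 'n::{finite,wellorder}"
  assumes g: "gpoly b = recip_quadratic c ^ j * r" and "1 \<le> j"
    and off_circle: "\<And>e. 0 < e \<Longrightarrow>
      \<exists>d x. \<bar>d\<bar> < e \<and> poly (recip_quadratic c ^ j + monom (of_real d) j) x = 0 \<and> cmod x \<noteq> 1"
  shows "b \<notin> interior Vset"
proof
  assume "b \<in> interior Vset"
  then obtain e where "0 < e" and ball: "ball b e \<subseteq> Vset"
    by (auto simp: mem_interior)
  obtain v where v: "\<And>d. gpoly (b + d *\<^sub>R v) = (recip_quadratic c ^ j + monom (of_real d) j) * r"
    using gpoly_perturbation[OF g \<open>1 \<le> j\<close>] by blast
  have "0 < e / (norm v + 1)"
    using \<open>0 < e\<close> by (intro divide_pos_pos add_nonneg_pos) auto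
  then obtain d x where d: "\<bar>d\<bar> < e / (norm v + 1)"
    and x: "poly (recip_quadratic c ^ j + monom (of_real d) j) x = 0" "cmod x \<noteq> 1"
    using off_circle by blast
  have "dist b (b + d *\<^sub>R v) = \<bar>d\<bar> * norm v"
    by (simp add: dist_norm)
  also have "\<dots> \<le> \<bar>d\<bar> * (norm v + 1)"
    by (simp add: mult_left_mono)
  also have "\<dots> < e"
    using d by (simp add: field_simps add_pos_nonneg)
  finally have "b + d *\<^sub>R v \<in> Vset"
    using ball by auto
  moreover have "poly (gpoly (b + d *\<^sub>R v)) x = 0"
    using x by (simp add: v)
  ultimately show False
    using x by (simp add: Vset_def)
qed

lemma double_root_factorization:
  fixes b :: "real ^ 'n::{finite,wellorder}"
  assumes "b \<in> Vset" and "1 < order z (gpoly b)"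
  shows "(\<exists>c r. \<bar>c\<bar> = 2 \<and> gpoly b = recip_quadratic c ^ 1 * r) \<or>
         (\<exists>c r. gpoly b = recip_quadratic c ^ 2 * r)"
proof -
  have "poly (gpoly b) z = 0"
    using assms(2) order_gt_1_iff[of "gpoly b"] by simp
  then have "cmod z = 1"
    using assms(1) by (simp add: Vset_def)
  define c where "c = 2 * Re z"
  have "z * cnj z = 1"
    using \<open>cmod z = 1\<close> complex_norm_square[of z] by simp
  then have Q: "recip_quadratic c = [:-z, 1:] * [:-cnj z, 1:]"
    using complex_add_cnj[of z] by (simp add: recip_quadratic_def c_def algebra_simps)
  obtain s where s: "gpoly b = [:-z, 1:] ^ 2 * s"
    using assms(2) order_divides[of z 2 "gpoly b"] by (auto elim: dvdE)
  show ?thesis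
  proof (cases "cnj z = z")
    case True
    then have "Im z = 0"
      by (simp add: complex_eq_iff)
    then have "\<bar>c\<bar> = 2"
      using \<open>cmod z = 1\<close> by (simp add: c_def cmod_eq_Re abs_mult)
    moreover have "gpoly b = recip_quadratic c ^ 1 * s"
      using s Q True by (simp add: power2_eq_square)
    ultimately show ?thesis
      by blast
  next
    case False
    have "order (cnj z) ([:-z, 1:] ^ 2) = 0"
      using False by (intro order_0I) simp
    then have "order (cnj z) (gpoly b) = order (cnj z) s"
      using s order_mult[of "[:-z, 1:] ^ 2" s "cnj z"] gpoly_nonzero[of b] by simp
    moreover have "order (cnj z) (gpoly b) = order z (gpoly b)"
      by (rule order_cnj) simp_all
    ultimately have "1 < order (cnj z) s"
      using assms(2) by simp
    then obtain r where r: "s = [:-cnj z, 1:] ^ 2 * r"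
      using assms(2) order_divides[of "cnj z" 2 s] by (auto elim: dvdE)
    have "recip_quadratic c ^ 2 = [:-z, 1:] ^ 2 * [:-cnj z, 1:] ^ 2"
      unfolding Q by (rule power_mult_distrib)
    then have "gpoly b = recip_quadratic c ^ 2 * r"
      by (simp only: s r mult.assoc)
    then show ?thesis
      by blast
  qed
qed

lemma not_interior_Vset_if_multiple_root:
  fixes b :: "real ^ 'n::{finite,wellorder}"
  assumes "b \<in> Vset" and "1 < order z (gpoly b)"
  shows "b \<notin> interior Vset"
  using double_root_factorization[OF assms]
proof (elim disjE exE conjE)
  fix c r
  assume "\<bar>c\<bar> = 2" and "gpoly b = recip_quadratic c ^ 1 * r"
  then show ?thesis
    using perturbed_recip_quadratic_root_off_circle
    by (intro not_interior_Vset_if_perturbed_root_off_circle) auto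
next
  fix c r
  assume "gpoly b = recip_quadratic c ^ 2 * r"
  then show ?thesis
    using perturbed_recip_quadratic_square_root_off_circle
    by (intro not_interior_Vset_if_perturbed_root_off_circle) auto
qed

theorem lemma2p1p3:
  "frontier (Vset :: (real ^ 'n::{finite,wellorder}) set) =
     {b \<in> Vset. \<exists>z. order z (gpoly b) > 1}"
  unfolding frontier_def closure_closed[OF closed_Vset]
proof (intro equalityI subsetI)
  fix b :: "real ^ 'n::{finite,wellorder}"
  assume "b \<in> Vset - interior Vset"
  then show "b \<in> {b \<in> Vset. \<exists>z. order z (gpoly b) > 1}"
    using interior_Vset_if_simple_roots not_le by blast
next
  fix b :: "real ^ 'n::{finite,wellorder}"
  assume "b \<in> {b \<in> Vset. \<exists>z. order z (gpoly b) > 1}"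
  then show "b \<in> Vset - interior Vset"
    using not_interior_Vset_if_multiple_root by blast
qed

end
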